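(* Let $U,U'\subset\mathbb{R}^n$ be arbitrary subsets and $h\colon U\to\mathbb{R}^n$, $h'\colon U'\to\mathbb{R}^n$ maps such that for every $r\ge0$ the spaces $HU_r$, $H\operatorname{Gr}(h)_r$, $Hh(U)_r$ (and likewise for $h'$) are finite dimensional, so that the $\mathbb{R}$-persistence modules $M^h$, $M^{h'}$ are defined. Then $$d_I(M^h,M^{h'})\le d_H(\operatorname{Gr}(h),\operatorname{Gr}(h')),$$ where $d_H$ is the Hausdorff distance induced by $d_{\mathbb{R}^n\times\mathbb{R}^n}$.
   Context: Fix a field $K$; $H$ is homology (in a fixed degree) with coefficients in $K$. On $\mathbb{R}^n$ use the Euclidean metric $d_{\mathbb{R}^n}$; on $\mathbb{R}^n\times\mathbb{R}^n$ use $d_{\mathbb{R}^n\times\mathbb{R}^n}((x_1,y_1),(x_2,y_2))=\max\{d_{\mathbb{R}^n}(x_1,x_2),d_{\mathbb{R}^n}(y_1,y_2)\}$. For a subset $U$ of either space and $r\ge0$, $U_r:=\{z:\inf_{u\in U}d(z,u)\le r\}$. For $h\colon U\to\mathbb{R}^n$, $\operatorname{Gr}(h)=\{(u,h(u)):u\in U\}$. For each $r\ge0$ the projections give a diagram $U_r\leftarrow\operatorname{Gr}(h)_r\rightarrow h(U)_r$, and applying $H$ gives a representation $V_r$ of the quiver $1\leftarrow2\rightarrow3$; for $s\le r$ inclusions induce a morphism $V_s\to V_r$. Interval representations $\mathbb{I}[b,d]$ ($1\le b\le d\le3$) have $K$ at vertices $b,\dots,d$, $0$ elsewhere, identity maps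 between copies of $K$ and zero otherwise. Choose for each $r$ an isomorphism $\eta_r\colon V_r\to\bigoplus_{b\le d}\mathbb{I}[b,d]^{m^r_{b,d}}$, and for $s\le r$ let $\phi(s,r):=\pi_r\circ\eta_r\circ(V_s\to V_r)\circ\eta_s^{-1}\circ\iota_s\colon\mathbb{I}[1,3]^{m^s_{1,3}}\to\mathbb{I}[1,3]^{m^r_{1,3}}$ ($\iota_s$ the summand inclusion, $\pi_r$ the summand projection), identified with a linear map $K^{m^s_{1,3}}\to K^{m^r_{1,3}}$. The $\mathbb{R}$-persistence module $M^h$ is $r\mapsto K^{m^r_{1,3}}$ ($0$ for $r<0$) with these transition maps; it is well defined up to isomorphism. An $\mathbb{R}$-persistence module is a functor from $(\mathbb{R},\le)$ to finite-dimensional $K$-vector spaces with transition maps $\varphi_M(s,t)$; $M(\delta)_t:=M_{t+\delta}$; $\varphi_M(\delta)_t:=\varphi_M(t,t+\delta)$. $M,N$ are $\delta$-interleaved if there are morphisms $f\colon M\to N(\delta)$, $g\colon N\to M(\delta)$ with $g(\delta)f=\varphi_M(2\delta)$, $f(\delta)g=\varphi_N(2\delta)$; $d_I(M,N)$ is the infimum of such $\delta$. *)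

theory Defs
  imports "HOL-Analysis.Analysis" "HOL-Homology.Homology"
begin

text \<open>All homology spaces are spaces of cycles
modulo boundaries; linear maps out of homology are represented as linear maps on
cycles vanishing exactly on boundaries (for isomorphisms).\<close>

type_synonym ('a,'k) kchain = "((nat \<Rightarrow> real) \<Rightarrow> 'a) \<Rightarrow> 'k"

definition ksupp :: "('a,'k::zero) kchain \<Rightarrow> ((nat \<Rightarrow> real) \<Rightarrow> 'a) set" where
  "ksupp c = {f. c f \<noteq> 0}"

definition kchain :: "nat \<Rightarrow> 'a::topological_space set \<Rightarrow> ('a,'k::zero) kchain \<Rightarrow> bool" where
  "kchain p X c \<longleftrightarrow> finite (ksupp c) \<and>
     (\<forall>f \<in> ksupp c. singular_simplex p (subtopology euclidean X) f)"

definition kbd :: "nat \<Rightarrow> ('a,'k::field) kchain \<Rightarrow> ('a,'k) kchain" where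
  "kbd p c = (if p = 0 then (\<lambda>_. 0) else
     (\<lambda>g. \<Sum>f \<in> ksupp c. \<Sum>k\<le>p. if singular_face p k f = g then (-1)^k * c f else 0))"

definition kpush :: "nat \<Rightarrow> ('a \<Rightarrow> 'b) \<Rightarrow> ('a,'k::field) kchain \<Rightarrow> ('b,'k) kchain" where
  "kpush p g c = (\<lambda>\<sigma>. \<Sum>f \<in> ksupp c. if simplex_map p g f = \<sigma> then c f else 0)"

definition kcycles :: "nat \<Rightarrow> 'a::topological_space set \<Rightarrow> ('a,'k::field) kchain set" where
  "kcycles p X = {c. kchain p X c \<and> kbd p c = (\<lambda>_. 0)}"

definition kboundaries :: "nat \<Rightarrow> 'a::topological_space set \<Rightarrow> ('a,'k::field) kchain set" where
  "kboundaries p X = {kbd (Suc p) c | c. kchain (Suc p) X c}"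

definition kfindim :: "'k::field itself \<Rightarrow> nat \<Rightarrow> 'a::topological_space set \<Rightarrow> bool" where
  "kfindim _ p X \<longleftrightarrow> (\<exists>F::('a,'k) kchain set. finite F \<and> F \<subseteq> kcycles p X \<and>
     (\<forall>z \<in> kcycles p X. \<exists>a. (\<lambda>\<sigma>. z \<sigma> - (\<Sum>w\<in>F. a w * w \<sigma>)) \<in> kboundaries p X))"

text \<open>The model representation (sum of interval modules I[b,d]^(m(b,d))):
at vertex i it has basis the triples (b,d,j) with 1 <= b <= i <= d <= 3 and j < m(b,d).\<close>

definition model_space :: "(nat \<times> nat \<Rightarrow> nat) \<Rightarrow> nat \<Rightarrow> (nat \<times> nat \<times> nat \<Rightarrow> 'k::zero) set" where
  "model_space m i = {v. \<forall>b d j. v (b,d,j) \<noteq> 0 \<longrightarrow>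
       1 \<le> b \<and> b \<le> i \<and> i \<le> d \<and> d \<le> 3 \<and> j < m (b,d)}"

text \<open>structure map vertex 2 -> vertex 1 (identity on summands I[1,2], I[1,3], zero otherwise)\<close>
definition model_21 :: "(nat \<times> nat \<times> nat \<Rightarrow> 'k::zero) \<Rightarrow> (nat \<times> nat \<times> nat \<Rightarrow> 'k)" where
  "model_21 v = (\<lambda>(b,d,j). if b = 1 then v (b,d,j) else 0)"

text \<open>structure map vertex 2 -> vertex 3 (identity on summands I[1,3], I[2,3], zero otherwise)\<close>
definition model_23 :: "(nat \<times> nat \<times> nat \<Rightarrow> 'k::zero) \<Rightarrow> (nat \<times> nat \<times> nat \<Rightarrow> 'k)" where
  "model_23 v = (\<lambda>(b,d,j). if d = 3 then v (b,d,j) else 0)"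

definition hom_iso :: "nat \<Rightarrow> 'a::topological_space set \<Rightarrow> (nat \<times> nat \<Rightarrow> nat) \<Rightarrow> nat
     \<Rightarrow> (('a,'k::field) kchain \<Rightarrow> (nat \<times> nat \<times> nat \<Rightarrow> 'k)) \<Rightarrow> bool" where
  "hom_iso p X m i e \<longleftrightarrow>
     (\<forall>z \<in> kcycles p X. e z \<in> model_space m i) \<and>
     (\<forall>v \<in> model_space m i. \<exists>z \<in> kcycles p X. e z = v) \<and>
     (\<forall>z \<in> kcycles p X. \<forall>w \<in> kcycles p X. e (\<lambda>\<sigma>. z \<sigma> + w \<sigma>) = (\<lambda>x. e z x + e w x)) \<and>
     (\<forall>z \<in> kcycles p X. \<forall>c. e (\<lambda>\<sigma>. c * z \<sigma>) = (\<lambda>x. c * e z x)) \<and>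
     (\<forall>z \<in> kcycles p X. e z = (\<lambda>_. 0) \<longleftrightarrow> z \<in> kboundaries p X)"

text \<open>(e1,e2,e3) is an isomorphism from the representation
  H_p(X1) <- H_p(X2) -> H_p(X3) (maps induced by fst, snd) onto the model
  representation with multiplicities m.\<close>
definition is_decomp :: "nat \<Rightarrow> 'a::topological_space set \<Rightarrow> ('a \<times> 'b::topological_space) set \<Rightarrow> 'b set
     \<Rightarrow> (nat \<times> nat \<Rightarrow> nat)
     \<Rightarrow> (('a,'k::field) kchain \<Rightarrow> (nat \<times> nat \<times> nat \<Rightarrow> 'k))
     \<Rightarrow> (('a \<times> 'b,'k) kchain \<Rightarrow> (nat \<times> nat \<times> nat \<Rightarrow> 'k))
     \<Rightarrow> (('b,'k) kchain \<Rightarrow> (nat \<times> nat \<times> nat \<Rightarrow> 'k)) \<Rightarrow> bool" where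
  "is_decomp p X1 X2 X3 m e1 e2 e3 \<longleftrightarrow>
     hom_iso p X1 m 1 e1 \<and> hom_iso p X2 m 2 e2 \<and> hom_iso p X3 m 3 e3 \<and>
     (\<forall>z \<in> kcycles p X2. e1 (kpush p fst z) = model_21 (e2 z)) \<and>
     (\<forall>z \<in> kcycles p X2. e3 (kpush p snd z) = model_23 (e2 z))"

text \<open>An R-persistence module: dimension function and transition maps on K^(dim t),
  where K^m is represented as functions nat => K vanishing from index m on.\<close>
type_synonym 'k pmod = "(real \<Rightarrow> nat) \<times> (real \<Rightarrow> real \<Rightarrow> (nat \<Rightarrow> 'k) \<Rightarrow> (nat \<Rightarrow> 'k))"

definition kvec :: "nat \<Rightarrow> (nat \<Rightarrow> 'k::zero) set" where
  "kvec m = {x. \<forall>j\<ge>m. x j = 0}"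

definition pm_dim :: "'k pmod \<Rightarrow> real \<Rightarrow> nat" where "pm_dim M = fst M"
definition pm_tr :: "'k pmod \<Rightarrow> real \<Rightarrow> real \<Rightarrow> (nat \<Rightarrow> 'k) \<Rightarrow> (nat \<Rightarrow> 'k)" where "pm_tr M = snd M"

definition pmorph :: "real \<Rightarrow> 'k::field pmod \<Rightarrow> 'k pmod \<Rightarrow> (real \<Rightarrow> (nat \<Rightarrow> 'k) \<Rightarrow> (nat \<Rightarrow> 'k)) \<Rightarrow> bool" where
  "pmorph \<delta> M N f \<longleftrightarrow>
     (\<forall>t. \<forall>x \<in> kvec (pm_dim M t). f t x \<in> kvec (pm_dim N (t + \<delta>))) \<and>
     (\<forall>t. \<forall>x \<in> kvec (pm_dim M t). \<forall>y \<in> kvec (pm_dim M t).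
         f t (\<lambda>j. x j + y j) = (\<lambda>j. f t x j + f t y j)) \<and>
     (\<forall>t. \<forall>x \<in> kvec (pm_dim M t). \<forall>c. f t (\<lambda>j. c * x j) = (\<lambda>j. c * f t x j)) \<and>
     (\<forall>s t. s \<le> t \<longrightarrow> (\<forall>x \<in> kvec (pm_dim M s).
         f t (pm_tr M s t x) = pm_tr N (s + \<delta>) (t + \<delta>) (f s x)))"

definition interleaved :: "real \<Rightarrow> 'k::field pmod \<Rightarrow> 'k pmod \<Rightarrow> bool" where
  "interleaved \<delta> M N \<longleftrightarrow> (\<exists>f g. pmorph \<delta> M N f \<and> pmorph \<delta> N M g \<and>
     (\<forall>t. \<forall>x \<in> kvec (pm_dim M t). g (t + \<delta>) (f t x) = pm_tr M t (t + 2 * \<delta>) x) \<and>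
     (\<forall>t. \<forall>x \<in> kvec (pm_dim N t). f (t + \<delta>) (g t x) = pm_tr N t (t + 2 * \<delta>) x))"

definition interleaving_distance :: "'k::field pmod \<Rightarrow> 'k pmod \<Rightarrow> ereal" where
  "interleaving_distance M N = Inf {ereal \<delta> | \<delta>. 0 \<le> \<delta> \<and> interleaved \<delta> M N}"

definition embed13 :: "(nat \<times> nat \<Rightarrow> nat) \<Rightarrow> (nat \<Rightarrow> 'k::zero) \<Rightarrow> (nat \<times> nat \<times> nat \<Rightarrow> 'k)" where
  "embed13 m x = (\<lambda>(b,d,j). if b = 1 \<and> d = 3 \<and> j < m (1,3) then x j else 0)"

definition extract13 :: "(nat \<times> nat \<Rightarrow> nat) \<Rightarrow> (nat \<times> nat \<times> nat \<Rightarrow> 'k::zero) \<Rightarrow> (nat \<Rightarrow> 'k)" where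
  "extract13 m v = (\<lambda>j. if j < m (1,3) then v (1,3,j) else 0)"

text \<open>Given the spaces G r (= Gr(h)_r), multiplicities m r and the vertex-2 components
  e2 r of the chosen decompositions, phi(s,r) = pi_r o eta_r o (V_s -> V_r) o eta_s^-1 o iota_s.\<close>
definition pmod_of :: "nat \<Rightarrow> (real \<Rightarrow> ('a::topological_space) set) \<Rightarrow> (real \<Rightarrow> nat \<times> nat \<Rightarrow> nat)
     \<Rightarrow> (real \<Rightarrow> ('a,'k::field) kchain \<Rightarrow> (nat \<times> nat \<times> nat \<Rightarrow> 'k)) \<Rightarrow> 'k pmod" where
  "pmod_of p G m e2 =
     ((\<lambda>t. if t < 0 then 0 else m t (1,3)),
      (\<lambda>s t x. if 0 \<le> s \<and> s \<le> t then
           extract13 (m t) (e2 t (SOME z. z \<in> kcycles p (G s) \<and> e2 s z = embed13 (m s) x))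
         else (\<lambda>_. 0)))"

definition thick :: "('a::metric_space) set \<Rightarrow> real \<Rightarrow> 'a set" where
  "thick S r = {z. S \<noteq> {} \<and> (INF u\<in>S. dist z u) \<le> r}"

definition dmax :: "('a::metric_space \<times> 'a) \<Rightarrow> ('a \<times> 'a) \<Rightarrow> real" where
  "dmax z w = max (dist (fst z) (fst w)) (dist (snd z) (snd w))"

definition thick2 :: "('a::metric_space \<times> 'a) set \<Rightarrow> real \<Rightarrow> ('a \<times> 'a) set" where
  "thick2 S r = {z. S \<noteq> {} \<and> (INF u\<in>S. dmax z u) \<le> r}"

definition hausdorff2 :: "('a::metric_space \<times> 'a) set \<Rightarrow> ('a \<times> 'a) set \<Rightarrow> ereal" where
  "hausdorff2 A B = Inf {ereal \<delta> | \<delta>. 0 \<le> \<delta> \<and> A \<subseteq> thick2 B \<delta> \<and> B \<subseteq> thick2 A \<delta>}"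

definition graph :: "('a \<Rightarrow> 'b) \<Rightarrow> 'a set \<Rightarrow> ('a \<times> 'b) set" where
  "graph h U = {(u, h u) | u. u \<in> U}"

end

theory Submission
  imports Defs
begin

text \<open>If \<open>Gr(h) \<subseteq> Gr(h')\<^sub>\<delta>\<close>, then also \<open>U \<subseteq> U'\<^sub>\<delta>\<close> and \<open>h(U) \<subseteq> h'(U')\<^sub>\<delta>\<close>, so each of the three
  spaces of the diagram for \<open>h\<close> at level \<open>r\<close> includes into the corresponding space for \<open>h'\<close> at
  level \<open>r + \<delta>\<close>, compatibly with the projections. The resulting morphism of representations
  \<open>V\<^sub>r \<rightarrow> V'\<^sub>r\<^sub>+\<^sub>\<delta>\<close> preserves the \<open>I[1,3]\<close>-part: a class at vertex 2 without \<open>I[1,3]\<close> component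
  is the sum of a class dying at vertex 1 and a class dying at vertex 3, both properties survive
  the morphism, and such classes have no \<open>I[1,3]\<close> component. Hence reading off \<open>I[1,3]\<close>
  coordinates is functorial along inclusions, which gives morphisms \<open>M\<^sup>h \<rightarrow> M\<^sup>h\<^sup>'(\<delta>)\<close> and back
  whose composites are the structure maps of the persistence modules.\<close>

section \<open>Chains with coefficients in a field\<close>

lemma ksupp_add_subset: "ksupp (\<lambda>\<sigma>. z \<sigma> + w \<sigma>) \<subseteq> ksupp z \<union> ksupp (w :: ('a,'k::field) kchain)"
  by (auto simp: ksupp_def)

lemma ksupp_scale_subset: "ksupp (\<lambda>\<sigma>. a * z \<sigma>) \<subseteq> ksupp (z :: ('a,'k::field) kchain)"
  by (auto simp: ksupp_def)

lemma kchain_add: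
  "kchain p X z \<Longrightarrow> kchain p X w \<Longrightarrow> kchain p X (\<lambda>\<sigma>. z \<sigma> + w \<sigma> :: 'k::field)"
  unfolding kchain_def using ksupp_add_subset[of z w] by (meson Un_iff finite_UnI finite_subset subsetD)

lemma kchain_scale: "kchain p X z \<Longrightarrow> kchain p X (\<lambda>\<sigma>. a * z \<sigma> :: 'k::field)"
  unfolding kchain_def using ksupp_scale_subset[of a z] by (meson finite_subset subsetD)

lemma kchain_mono: "X \<subseteq> Y \<Longrightarrow> kchain p X c \<Longrightarrow> kchain p Y c"
  unfolding kchain_def by (auto simp: singular_simplex_subtopology)

lemma kbd_eq_sum:
  assumes "finite S" "ksupp c \<subseteq> S" "p \<noteq> 0"
  shows "kbd p c g = (\<Sum>f\<in>S. \<Sum>k\<le>p. if singular_face p k f = g then (-1)^k * c f else 0)"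
  unfolding kbd_def using assms by (simp, intro sum.mono_neutral_left) (auto simp: ksupp_def cong: if_cong)

lemma kbd_add:
  assumes "finite (ksupp z)" "finite (ksupp w)"
  shows "kbd p (\<lambda>\<sigma>. z \<sigma> + w \<sigma>) = (\<lambda>g. kbd p z g + kbd p (w :: ('a,'k::field) kchain) g)"
proof (cases "p = 0")
  case False
  let ?S = "ksupp z \<union> ksupp w"
  have "finite ?S" using assms by simp
  then show ?thesis
    using False ksupp_add_subset[of z w]
    by (simp add: kbd_eq_sum[of ?S] sum.distrib[symmetric] distrib_left if_distrib fun_eq_iff
        cong: if_cong)
qed (simp add: kbd_def)

lemma kbd_scale:
  assumes "finite (ksupp z)"
  shows "kbd p (\<lambda>\<sigma>. a * z \<sigma>) = (\<lambda>g. a * kbd p (z :: ('a,'k::field) kchain) g)"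
proof (cases "p = 0")
  case False
  have "kbd p (\<lambda>\<sigma>. a * z \<sigma>) g = a * kbd p z g" for g
    unfolding kbd_eq_sum[OF assms ksupp_scale_subset False] kbd_eq_sum[OF assms subset_refl False]
    by (auto simp: sum_distrib_left mult.left_commute intro!: sum.cong)
  then show ?thesis by blast
qed (simp add: kbd_def)

lemma kcycles_add: "z \<in> kcycles p X \<Longrightarrow> w \<in> kcycles p X \<Longrightarrow> (\<lambda>\<sigma>. z \<sigma> + w \<sigma>) \<in> kcycles p X"
  unfolding kcycles_def by (auto simp: kchain_add kbd_add kchain_def[of p X z] kchain_def[of p X w])

lemma kcycles_scale: "z \<in> kcycles p X \<Longrightarrow> (\<lambda>\<sigma>. a * z \<sigma>) \<in> kcycles p X"
  unfolding kcycles_def by (auto simp: kchain_scale kbd_scale kchain_def[of p X z])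

lemma kcycles_diff: "z \<in> kcycles p X \<Longrightarrow> w \<in> kcycles p X \<Longrightarrow> (\<lambda>\<sigma>. z \<sigma> - w \<sigma>) \<in> kcycles p X"
  using kcycles_add[OF _ kcycles_scale, of z p X w "-1"] by simp

lemma kcycles_mono: "X \<subseteq> Y \<Longrightarrow> kcycles p X \<subseteq> kcycles p Y"
  unfolding kcycles_def using kchain_mono by blast

lemma kboundaries_mono: "X \<subseteq> Y \<Longrightarrow> kboundaries p X \<subseteq> kboundaries p Y"
  unfolding kboundaries_def using kchain_mono by blast

lemma sum_over_fibres:
  assumes "finite S" "m ` A \<subseteq> S"
  shows "(\<Sum>\<sigma>\<in>S. \<Sum>x\<in>A. if m x = \<sigma> then F \<sigma> x else 0) = (\<Sum>x\<in>A. F (m x) x)"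
  using assms by (subst sum.swap) (auto intro!: sum.cong)

lemma sum_over_fibres2:
  assumes "finite S" "\<And>x k. x \<in> A \<Longrightarrow> k \<in> K \<Longrightarrow> m x k \<in> S"
  shows "(\<Sum>\<sigma>\<in>S. \<Sum>x\<in>A. \<Sum>k\<in>K. if m x k = \<sigma> then F \<sigma> x k else 0) = (\<Sum>x\<in>A. \<Sum>k\<in>K. F (m x k) x k)"
proof -
  have "(\<Sum>\<sigma>\<in>S. \<Sum>x\<in>A. \<Sum>k\<in>K. if m x k = \<sigma> then F \<sigma> x k else 0)
      = (\<Sum>x\<in>A. \<Sum>k\<in>K. \<Sum>\<sigma>\<in>S. if m x k = \<sigma> then F \<sigma> x k else 0)"
    by (rule trans[OF sum.swap], intro sum.cong refl, rule sum.swap)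
  then show ?thesis using assms by (auto intro!: sum.cong)
qed

lemma sum_if_times_sum_if_swap:
  "(\<Sum>k\<in>K. if P k then t k * (\<Sum>f\<in>A. if Q f then c f else 0) else 0) =
   (\<Sum>f\<in>A. if Q f then (\<Sum>k\<in>K. if P k then t k * c f else 0) else (0::'k::field))"
proof -
  have "(\<Sum>k\<in>K. if P k then t k * (\<Sum>f\<in>A. if Q f then c f else 0) else 0)
     = (\<Sum>k\<in>K. \<Sum>f\<in>A. if P k \<and> Q f then t k * c f else 0)"
    by (auto simp: sum_distrib_left intro!: sum.cong)
  then show ?thesis by (subst (asm) sum.swap) (auto intro!: sum.cong)
qed

lemma ksupp_kpush: "ksupp (kpush p g c) \<subseteq> simplex_map p g ` ksupp (c :: ('a,'k::field) kchain)"
  unfolding kpush_def ksupp_def by (force intro: sum.neutral)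

lemma kpush_eq_sum:
  assumes "finite S" "ksupp c \<subseteq> S"
  shows "kpush p g c \<sigma> = (\<Sum>f\<in>S. if simplex_map p g f = \<sigma> then c f else 0)"
  unfolding kpush_def using assms by (intro sum.mono_neutral_left) (auto simp: ksupp_def)

lemma ksupp_kbd:
  "ksupp (kbd p c) \<subseteq> (\<lambda>(f,k). singular_face p k f) ` (ksupp (c :: ('a,'k::field) kchain) \<times> {..p})"
proof
  fix \<rho> assume "\<rho> \<in> ksupp (kbd p c)"
  then have "(\<Sum>f\<in>ksupp c. \<Sum>k\<le>p. if singular_face p k f = \<rho> then (-1)^k * c f else 0) \<noteq> 0"
    by (simp add: ksupp_def kbd_def split: if_splits)
  then obtain f where "f \<in> ksupp c"
    and "(\<Sum>k\<le>p. if singular_face p k f = \<rho> then (-1)^k * c f else 0) \<noteq> 0"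
    by (rule sum.not_neutral_contains_not_neutral)
  moreover from this(2) obtain k where "k \<le> p" "singular_face p k f = \<rho>"
    by (rule sum.not_neutral_contains_not_neutral) (simp split: if_splits)
  ultimately show "\<rho> \<in> (\<lambda>(f,k). singular_face p k f) ` (ksupp c \<times> {..p})" by force
qed

lemma singular_face_simplex_map_Suc:
  "k \<le> Suc q \<Longrightarrow>
    singular_face (Suc q) k (simplex_map (Suc q) g f) = simplex_map q g (singular_face (Suc q) k f)"
  using singular_face_simplex_map[of "Suc q" k g f]
  by (auto simp: simplex_map_def singular_face_def fun_eq_iff restrict_def)

lemma kbd_kpush:
  assumes fin: "finite (ksupp (c :: ('a,'k::field) kchain))"
  shows "kbd (Suc q) (kpush (Suc q) g c) = kpush q g (kbd (Suc q) c)"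
proof
  fix \<tau>
  let ?p = "Suc q" and ?A = "ksupp c"
  let ?S = "simplex_map ?p g ` ?A"
  let ?T = "(\<lambda>(f,k). singular_face ?p k f) ` (?A \<times> {..?p})"
  let ?term = "\<lambda>f k. (-1)^k * c f"
  have "kbd ?p (kpush ?p g c) \<tau>
      = (\<Sum>\<sigma>\<in>?S. \<Sum>f\<in>?A. if simplex_map ?p g f = \<sigma> then
           (\<Sum>k\<le>?p. if singular_face ?p k \<sigma> = \<tau> then ?term f k else 0) else 0)"
    unfolding kbd_eq_sum[OF finite_imageI[OF fin] ksupp_kpush Zero_not_Suc[symmetric]]
    unfolding kpush_def
    by (intro sum.cong refl sum_if_times_sum_if_swap)
  also have "\<dots> = (\<Sum>f\<in>?A. \<Sum>k\<le>?p. if singular_face ?p k (simplex_map ?p g f) = \<tau> then ?term f k else 0)"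
    by (rule sum_over_fibres) (use fin in auto)
  also have "\<dots> = (\<Sum>f\<in>?A. \<Sum>k\<le>?p. if simplex_map q g (singular_face ?p k f) = \<tau> then ?term f k else 0)"
    by (intro sum.cong refl) (simp add: singular_face_simplex_map_Suc)
  also have "\<dots> = (\<Sum>\<rho>\<in>?T. \<Sum>f\<in>?A. \<Sum>k\<le>?p. if singular_face ?p k f = \<rho> then
           (if simplex_map q g \<rho> = \<tau> then ?term f k else 0) else 0)"
    by (rule sum_over_fibres2[symmetric]) (use fin in force)+
  also have "\<dots> = (\<Sum>\<rho>\<in>?T. if simplex_map q g \<rho> = \<tau> then kbd ?p c \<rho> else 0)"
    by (intro sum.cong refl) (simp add: kbd_def del: sum.atMost_Suc cong: if_cong)
  also have "\<dots> = kpush q g (kbd ?p c) \<tau>"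
    using fin by (intro kpush_eq_sum[symmetric] ksupp_kbd) simp
  finally show "kbd ?p (kpush ?p g c) \<tau> = kpush q g (kbd ?p c) \<tau>" .
qed

lemma kchain_kpush:
  assumes "kchain p X c" "continuous_map (top_of_set X) (top_of_set Y) g"
  shows "kchain p Y (kpush p g (c :: ('a::topological_space,'k::field) kchain))"
proof -
  have "finite (ksupp c)" "\<And>f. f \<in> ksupp c \<Longrightarrow> singular_simplex p (top_of_set X) f"
    using assms(1) by (auto simp: kchain_def)
  then show ?thesis
    using ksupp_kpush[of p g c] finite_subset[OF ksupp_kpush[of p g c]]
    by (auto simp: kchain_def intro!: singular_simplex_simplex_map[OF _ assms(2)])
qed

lemma kcycles_kpush:
  assumes "c \<in> kcycles p X" "continuous_map (top_of_set X) (top_of_set Y) g"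
  shows "kpush p g (c :: ('a::topological_space,'k::field) kchain) \<in> kcycles p Y"
proof -
  have "kbd p (kpush p g c) = (\<lambda>_. 0)"
  proof (cases p)
    case (Suc q)
    with assms(1) have "kbd p (kpush p g c) = kpush q g (kbd p c)"
      by (simp add: kbd_kpush kcycles_def kchain_def)
    with assms(1) show ?thesis by (simp add: kcycles_def kpush_def ksupp_def)
  qed (simp add: kbd_def)
  with assms show ?thesis by (simp add: kcycles_def kchain_kpush[OF _ assms(2)])
qed

section \<open>Interval decompositions and their \<open>I[1,3]\<close> part\<close>

lemma hom_iso_add:
  "hom_iso p X m i e \<Longrightarrow> z \<in> kcycles p X \<Longrightarrow> w \<in> kcycles p X \<Longrightarrow>
    e (\<lambda>\<sigma>. z \<sigma> + w \<sigma>) = (\<lambda>x. e z x + e w x)"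
  by (simp add: hom_iso_def)

lemma hom_iso_scale: "hom_iso p X m i e \<Longrightarrow> z \<in> kcycles p X \<Longrightarrow> e (\<lambda>\<sigma>. c * z \<sigma>) = (\<lambda>x. c * e z x)"
  by (simp add: hom_iso_def)

lemma hom_iso_diff:
  assumes "hom_iso p X m i e" "z \<in> kcycles p X" "w \<in> kcycles p X"
  shows "e (\<lambda>\<sigma>. z \<sigma> - w \<sigma>) = (\<lambda>x. e z x - e w x)"
proof -
  have "e (\<lambda>\<sigma>. z \<sigma> - w \<sigma>) = e (\<lambda>\<sigma>. z \<sigma> + (-1) * w \<sigma>)"
    by simp
  also have "\<dots> = (\<lambda>x. e z x + (-1) * e w x)"
    using hom_iso_add[OF assms(1,2) kcycles_scale[OF assms(3)], of "-1"]
      hom_iso_scale[OF assms(1,3), of "-1"]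
    by simp
  finally show ?thesis by simp
qed

lemma hom_iso_surj: "hom_iso p X m i e \<Longrightarrow> v \<in> model_space m i \<Longrightarrow> \<exists>z\<in>kcycles p X. e z = v"
  by (simp add: hom_iso_def)

lemma hom_iso_inclusion_zero:
  assumes "hom_iso p X m i e" "hom_iso p Y n i f" "X \<subseteq> Y"
    and "z \<in> kcycles p X" "e z = (\<lambda>_. 0)"
  shows "f z = (\<lambda>_. 0)"
proof -
  have "z \<in> kboundaries p Y"
    using assms(1,4,5) kboundaries_mono[OF assms(3)] by (auto simp: hom_iso_def)
  moreover have "z \<in> kcycles p Y"
    using assms(4) kcycles_mono[OF assms(3)] by blast
  ultimately show ?thesis
    using assms(2) by (simp add: hom_iso_def)
qed

lemma hom_iso_inclusion_eq:
  assumes e: "hom_iso p X m i e" and f: "hom_iso p Y n i f" and "X \<subseteq> Y"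
    and z: "z \<in> kcycles p X" "z' \<in> kcycles p X" "e z = e z'"
  shows "f z = f z'"
proof -
  have "f (\<lambda>\<sigma>. z \<sigma> - z' \<sigma>) = (\<lambda>_. 0)"
    using z by (intro hom_iso_inclusion_zero[OF e f \<open>X \<subseteq> Y\<close>] kcycles_diff) (simp_all add: hom_iso_diff[OF e])
  moreover have "z \<in> kcycles p Y" "z' \<in> kcycles p Y"
    using z kcycles_mono[OF \<open>X \<subseteq> Y\<close>] by blast+
  ultimately show ?thesis
    by (simp add: hom_iso_diff[OF f] fun_eq_iff)
qed

lemma extract13_model_21 [simp]: "extract13 m (model_21 v) = extract13 m v"
  by (auto simp: extract13_def model_21_def)

lemma extract13_model_23 [simp]: "extract13 m (model_23 v) = extract13 m v"
  by (auto simp: extract13_def model_23_def)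

lemma extract13_zero [simp]: "extract13 m (\<lambda>_. 0) = (\<lambda>_. 0)"
  by (simp add: extract13_def)

lemma extract13_add:
  "extract13 m (\<lambda>x. a x + b x) = (\<lambda>j. extract13 m a j + extract13 m b j :: 'k::field)"
  by (auto simp: extract13_def)

lemma extract13_diff:
  "extract13 m (\<lambda>x. a x - b x) = (\<lambda>j. extract13 m a j - extract13 m b j :: 'k::field)"
  by (auto simp: extract13_def)

lemma extract13_scale: "extract13 m (\<lambda>x. c * a x) = (\<lambda>j. c * extract13 m a j :: 'k::field)"
  by (simp add: extract13_def fun_eq_iff)

lemma extract13_embed13: "x \<in> kvec (m (1,3)) \<Longrightarrow> extract13 m (embed13 m x) = x"
  by (auto simp: extract13_def embed13_def kvec_def fun_eq_iff)

lemma extract13_in_kvec: "extract13 m v \<in> kvec (m (1,3))"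
  by (simp add: extract13_def kvec_def)

lemma embed13_in_model_space: "embed13 m x \<in> model_space m 2"
  by (auto simp: embed13_def model_space_def split: if_splits)

text \<open>At vertex 2 only the summands with birth 1 or 2 survive; without an I[1,3] component,
  the birth-2 part dies under the map to vertex 1 and the birth-1 part under the map to vertex 3.\<close>
lemma model_space_2_split:
  fixes v :: "nat \<times> nat \<times> nat \<Rightarrow> 'k::field"
  assumes v: "v \<in> model_space m 2" "extract13 m v = (\<lambda>_. 0)"
  obtains a b where "a \<in> model_space m 2" "b \<in> model_space m 2" "v = (\<lambda>x. a x + b x)"
    "model_21 a = (\<lambda>_. 0)" "model_23 b = (\<lambda>_. 0)"
proof
  define v2 where "v2 = (\<lambda>(b::nat,d::nat,j::nat). if b = 2 then v (b,d,j) else 0)"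
  define v1 where "v1 = (\<lambda>(b::nat,d::nat,j::nat). if b = 2 then 0 else v (b,d,j))"
  show "v2 \<in> model_space m 2" "v1 \<in> model_space m 2"
    using v(1) by (auto simp: model_space_def v1_def v2_def)
  show "v = (\<lambda>x. v2 x + v1 x)"
    by (auto simp: v1_def v2_def)
  show "model_21 v2 = (\<lambda>_. 0)"
    by (auto simp: model_21_def v2_def)
  have v13: "v (1,3,j) = 0" if "j < m (1,3)" for j
    using v(2) that by (auto simp: extract13_def fun_eq_iff dest: spec[of _ j])
  show "model_23 v1 = (\<lambda>_. 0)"
  proof
    fix x :: "nat \<times> nat \<times> nat"
    obtain b d j where x: "x = (b,d,j)" by (cases x)
    show "model_23 v1 x = 0"
    proof (rule ccontr)
      assume "model_23 v1 x \<noteq> 0"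
      then have "d = 3" "b \<noteq> 2" "v (b,d,j) \<noteq> 0"
        by (auto simp: model_23_def v1_def x split: if_splits)
      moreover from this(3) have "1 \<le> b" "b \<le> 2" "j < m (b,d)"
        using v(1) by (auto simp: model_space_def)
      ultimately show False
        using v13[of j] by (cases "b = 1") auto
    qed
  qed
qed

definition span_decomposition :: "nat \<Rightarrow> 'a::topological_space set \<Rightarrow> ('a \<times> 'b::topological_space) set
     \<Rightarrow> 'b set \<Rightarrow> (nat \<times> nat \<Rightarrow> nat)
     \<Rightarrow> (('a,'k::field) kchain \<Rightarrow> (nat \<times> nat \<times> nat \<Rightarrow> 'k))
     \<Rightarrow> (('a \<times> 'b,'k) kchain \<Rightarrow> (nat \<times> nat \<times> nat \<Rightarrow> 'k))
     \<Rightarrow> (('b,'k) kchain \<Rightarrow> (nat \<times> nat \<times> nat \<Rightarrow> 'k)) \<Rightarrow> bool" where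
  "span_decomposition p X1 X2 X3 m e1 e2 e3 \<longleftrightarrow>
     is_decomp p X1 X2 X3 m e1 e2 e3 \<and> fst ` X2 \<subseteq> X1 \<and> snd ` X2 \<subseteq> X3"

lemma is_decomp_hom_iso_2: "is_decomp p X1 X2 X3 m e1 e2 e3 \<Longrightarrow> hom_iso p X2 m 2 e2"
  by (simp add: is_decomp_def)

lemma span_decomposition_is_decomp: "span_decomposition p X1 X2 X3 m e1 e2 e3 \<Longrightarrow> is_decomp p X1 X2 X3 m e1 e2 e3"
  by (simp add: span_decomposition_def)

lemma span_decomposition_hom_iso_2: "span_decomposition p X1 X2 X3 m e1 e2 e3 \<Longrightarrow> hom_iso p X2 m 2 e2"
  by (rule is_decomp_hom_iso_2[OF span_decomposition_is_decomp])

lemma continuous_map_fst_top_of_set: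
  "fst ` X2 \<subseteq> X1 \<Longrightarrow> continuous_map (top_of_set X2) (top_of_set X1) fst"
  by (auto intro: continuous_on_fst continuous_on_id)

lemma continuous_map_snd_top_of_set:
  "snd ` X2 \<subseteq> X3 \<Longrightarrow> continuous_map (top_of_set X2) (top_of_set X3) snd"
  by (auto intro: continuous_on_snd continuous_on_id)

text \<open>In coordinates, \<open>transition13 p X m e n f\<close> is the paper's \<open>\<phi>\<close>: a vector is placed in the
  \<open>I[1,3]\<close> summand of the decomposition \<open>e\<close> of \<open>H X\<close>, represented by a cycle, and its \<open>I[1,3]\<close>
  coordinates are read off with the decomposition \<open>f\<close> of a larger space, into which the cycle
  includes unchanged.\<close>

definition lift13 :: "nat \<Rightarrow> 'a::topological_space set \<Rightarrow> (nat \<times> nat \<Rightarrow> nat)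
     \<Rightarrow> (('a,'k::field) kchain \<Rightarrow> (nat \<times> nat \<times> nat \<Rightarrow> 'k)) \<Rightarrow> (nat \<Rightarrow> 'k) \<Rightarrow> ('a,'k) kchain" where
  "lift13 p X m e x = (SOME z. z \<in> kcycles p X \<and> e z = embed13 m x)"

definition transition13 :: "nat \<Rightarrow> 'a::topological_space set \<Rightarrow> (nat \<times> nat \<Rightarrow> nat)
     \<Rightarrow> (('a,'k::field) kchain \<Rightarrow> (nat \<times> nat \<times> nat \<Rightarrow> 'k))
     \<Rightarrow> (nat \<times> nat \<Rightarrow> nat) \<Rightarrow> (('a,'k) kchain \<Rightarrow> (nat \<times> nat \<times> nat \<Rightarrow> 'k)) \<Rightarrow> (nat \<Rightarrow> 'k) \<Rightarrow> (nat \<Rightarrow> 'k)" where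
  "transition13 p X m e n f x = extract13 n (f (lift13 p X m e x))"

lemma lift13:
  assumes "hom_iso p X m 2 e"
  shows "lift13 p X m e x \<in> kcycles p X" "e (lift13 p X m e x) = embed13 m x"
proof -
  have "\<exists>z. z \<in> kcycles p X \<and> e z = embed13 m x"
    using hom_iso_surj[OF assms embed13_in_model_space] by blast
  then show "lift13 p X m e x \<in> kcycles p X" "e (lift13 p X m e x) = embed13 m x"
    unfolding lift13_def by (metis (mono_tags, lifting) someI_ex)+
qed

lemma transition13_in_kvec: "transition13 p X m e n f x \<in> kvec (n (1,3))"
  unfolding transition13_def by (rule extract13_in_kvec)

context
  fixes p :: nat and m n :: "nat \<times> nat \<Rightarrow> nat"
    and X1 Y1 :: "'a::topological_space set" and X2 Y2 :: "('a \<times> 'b::topological_space) set"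
    and X3 Y3 :: "'b set"
    and e1 f1 :: "('a,'k::field) kchain \<Rightarrow> (nat \<times> nat \<times> nat \<Rightarrow> 'k)"
    and e2 f2 :: "('a \<times> 'b,'k) kchain \<Rightarrow> (nat \<times> nat \<times> nat \<Rightarrow> 'k)"
    and e3 f3 :: "('b,'k) kchain \<Rightarrow> (nat \<times> nat \<times> nat \<Rightarrow> 'k)"
  assumes X: "span_decomposition p X1 X2 X3 m e1 e2 e3"
    and Y: "is_decomp p Y1 Y2 Y3 n f1 f2 f3"
    and sub: "X1 \<subseteq> Y1" "X2 \<subseteq> Y2" "X3 \<subseteq> Y3"
begin

lemma extract13_inclusion_vanish_of_model_21:
  assumes z: "z \<in> kcycles p X2" "model_21 (e2 z) = (\<lambda>_. 0)"
  shows "extract13 n (f2 z) = (\<lambda>_. 0)"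
proof -
  have "kpush p fst z \<in> kcycles p X1"
    using X z(1) by (auto simp: span_decomposition_def intro: kcycles_kpush continuous_map_fst_top_of_set)
  moreover have "e1 (kpush p fst z) = (\<lambda>_. 0)"
    using X z by (simp add: span_decomposition_def is_decomp_def)
  ultimately have "f1 (kpush p fst z) = (\<lambda>_. 0)"
    using X Y sub(1) by (auto simp: span_decomposition_def is_decomp_def intro: hom_iso_inclusion_zero)
  moreover have "z \<in> kcycles p Y2"
    using z(1) kcycles_mono[OF sub(2)] by blast
  ultimately have "model_21 (f2 z) = (\<lambda>_. 0)"
    using Y by (simp add: is_decomp_def)
  then show ?thesis
    by (metis extract13_model_21 extract13_zero)
qed

lemma extract13_inclusion_vanish_of_model_23:
  assumes z: "z \<in> kcycles p X2" "model_23 (e2 z) = (\<lambda>_. 0)"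
  shows "extract13 n (f2 z) = (\<lambda>_. 0)"
proof -
  have "kpush p snd z \<in> kcycles p X3"
    using X z(1) by (auto simp: span_decomposition_def intro: kcycles_kpush continuous_map_snd_top_of_set)
  moreover have "e3 (kpush p snd z) = (\<lambda>_. 0)"
    using X z by (simp add: span_decomposition_def is_decomp_def)
  ultimately have "f3 (kpush p snd z) = (\<lambda>_. 0)"
    using X Y sub(3) by (auto simp: span_decomposition_def is_decomp_def intro: hom_iso_inclusion_zero)
  moreover have "z \<in> kcycles p Y2"
    using z(1) kcycles_mono[OF sub(2)] by blast
  ultimately have "model_23 (f2 z) = (\<lambda>_. 0)"
    using Y by (simp add: is_decomp_def)
  then show ?thesis
    by (metis extract13_model_23 extract13_zero)
qed

lemma extract13_inclusion_vanish:
  assumes w: "w \<in> kcycles p X2" "extract13 m (e2 w) = (\<lambda>_. 0)"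
  shows "extract13 n (f2 w) = (\<lambda>_. 0)"
proof -
  have hX: "hom_iso p X2 m 2 e2" and hY: "hom_iso p Y2 n 2 f2"
    using span_decomposition_hom_iso_2[OF X] is_decomp_hom_iso_2[OF Y] .
  have "e2 w \<in> model_space m 2"
    using hX w(1) by (simp add: hom_iso_def)
  then obtain a b where ab: "a \<in> model_space m 2" "b \<in> model_space m 2" "e2 w = (\<lambda>x. a x + b x)"
    "model_21 a = (\<lambda>_. 0)" "model_23 b = (\<lambda>_. 0)"
    using w(2) by (rule model_space_2_split)
  obtain za zb where za: "za \<in> kcycles p X2" "e2 za = a" and zb: "zb \<in> kcycles p X2" "e2 zb = b"
    using hom_iso_surj[OF hX ab(1)] hom_iso_surj[OF hX ab(2)] by blast
  have "e2 w = e2 (\<lambda>\<sigma>. za \<sigma> + zb \<sigma>)"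
    using ab(3) za zb by (simp add: hom_iso_add[OF hX])
  then have "f2 w = f2 (\<lambda>\<sigma>. za \<sigma> + zb \<sigma>)"
    using w(1) za(1) zb(1) by (intro hom_iso_inclusion_eq[OF hX hY sub(2)] kcycles_add)
  also have "\<dots> = (\<lambda>x. f2 za x + f2 zb x)"
    using za(1) zb(1) kcycles_mono[OF sub(2)] by (intro hom_iso_add[OF hY]) blast+
  finally show ?thesis
    using extract13_inclusion_vanish_of_model_21[OF za(1)] extract13_inclusion_vanish_of_model_23[OF zb(1)]
      ab(4,5) za(2) zb(2)
    by (simp add: extract13_add)
qed

lemma extract13_inclusion_eq:
  assumes "z \<in> kcycles p X2" "z' \<in> kcycles p X2" "extract13 m (e2 z) = extract13 m (e2 z')"
  shows "extract13 n (f2 z) = extract13 n (f2 z')"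
proof -
  have hX: "hom_iso p X2 m 2 e2" and hY: "hom_iso p Y2 n 2 f2"
    using span_decomposition_hom_iso_2[OF X] is_decomp_hom_iso_2[OF Y] .
  have "extract13 m (e2 (\<lambda>\<sigma>. z \<sigma> - z' \<sigma>)) = (\<lambda>_. 0)"
    using assms by (simp add: hom_iso_diff[OF hX] extract13_diff)
  then have "extract13 n (f2 (\<lambda>\<sigma>. z \<sigma> - z' \<sigma>)) = (\<lambda>_. 0)"
    using assms by (intro extract13_inclusion_vanish kcycles_diff)
  moreover have "z \<in> kcycles p Y2" "z' \<in> kcycles p Y2"
    using assms kcycles_mono[OF sub(2)] by blast+
  ultimately show ?thesis
    by (simp add: hom_iso_diff[OF hY] extract13_diff fun_eq_iff)
qed

lemma transition13_add:
  assumes "x \<in> kvec (m (1,3))" "y \<in> kvec (m (1,3))"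
  shows "transition13 p X2 m e2 n f2 (\<lambda>j. x j + y j)
       = (\<lambda>j. transition13 p X2 m e2 n f2 x j + transition13 p X2 m e2 n f2 y j)"
proof -
  have hX: "hom_iso p X2 m 2 e2" and hY: "hom_iso p Y2 n 2 f2"
    using span_decomposition_hom_iso_2[OF X] is_decomp_hom_iso_2[OF Y] .
  define z1 z2 z3 where "z1 = lift13 p X2 m e2 x" and "z2 = lift13 p X2 m e2 y"
    and "z3 = lift13 p X2 m e2 (\<lambda>j. x j + y j)"
  have z: "z1 \<in> kcycles p X2" "z2 \<in> kcycles p X2" "z3 \<in> kcycles p X2"
    unfolding z1_def z2_def z3_def using lift13(1)[OF hX] by blast+
  have "extract13 m (e2 z3) = extract13 m (e2 (\<lambda>\<sigma>. z1 \<sigma> + z2 \<sigma>))"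
    using assms unfolding z1_def z2_def z3_def
    by (simp add: lift13[OF hX] hom_iso_add[OF hX] extract13_add extract13_embed13 kvec_def)
  then have "extract13 n (f2 z3) = extract13 n (f2 (\<lambda>\<sigma>. z1 \<sigma> + z2 \<sigma>))"
    using z by (intro extract13_inclusion_eq kcycles_add)
  moreover have "z1 \<in> kcycles p Y2" "z2 \<in> kcycles p Y2"
    using z kcycles_mono[OF sub(2)] by blast+
  ultimately show ?thesis
    by (simp add: transition13_def z1_def[symmetric] z2_def[symmetric] z3_def[symmetric]
        hom_iso_add[OF hY] extract13_add)
qed

lemma transition13_scale:
  assumes "x \<in> kvec (m (1,3))"
  shows "transition13 p X2 m e2 n f2 (\<lambda>j. c * x j) = (\<lambda>j. c * transition13 p X2 m e2 n f2 x j)"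
proof -
  have hX: "hom_iso p X2 m 2 e2" and hY: "hom_iso p Y2 n 2 f2"
    using span_decomposition_hom_iso_2[OF X] is_decomp_hom_iso_2[OF Y] .
  define z1 z3 where "z1 = lift13 p X2 m e2 x" and "z3 = lift13 p X2 m e2 (\<lambda>j. c * x j)"
  have z: "z1 \<in> kcycles p X2" "z3 \<in> kcycles p X2"
    unfolding z1_def z3_def using lift13(1)[OF hX] by blast+
  have "extract13 m (e2 z3) = extract13 m (e2 (\<lambda>\<sigma>. c * z1 \<sigma>))"
    using assms unfolding z1_def z3_def
    by (simp add: lift13[OF hX] hom_iso_scale[OF hX] extract13_scale extract13_embed13 kvec_def)
  then have "extract13 n (f2 z3) = extract13 n (f2 (\<lambda>\<sigma>. c * z1 \<sigma>))"
    using z by (intro extract13_inclusion_eq kcycles_scale)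
  moreover have "z1 \<in> kcycles p Y2"
    using z kcycles_mono[OF sub(2)] by blast
  ultimately show ?thesis
    by (simp add: transition13_def z1_def[symmetric] z3_def[symmetric]
        hom_iso_scale[OF hY] extract13_scale)
qed

lemma transition13_zero: "transition13 p X2 m e2 n f2 (\<lambda>_. 0) = (\<lambda>_. 0)"
  using transition13_scale[of "\<lambda>_. 0" 0] by (simp add: kvec_def)

lemma transition13_comp:
  assumes "hom_iso p W l 2 d" "W \<subseteq> X2"
  shows "transition13 p X2 m e2 n f2 (transition13 p W l d m e2 x) = transition13 p W l d n f2 x"
proof -
  have hX: "hom_iso p X2 m 2 e2"
    by (rule span_decomposition_hom_iso_2[OF X])
  define z y where "z = lift13 p W l d x" and "y = extract13 m (e2 z)"
  have z: "z \<in> kcycles p X2"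
    using lift13(1)[OF assms(1)] kcycles_mono[OF assms(2)] unfolding z_def by blast
  have "extract13 m (e2 (lift13 p X2 m e2 y)) = extract13 m (e2 z)"
    by (simp add: lift13[OF hX] extract13_embed13[OF extract13_in_kvec] y_def)
  then have "extract13 n (f2 (lift13 p X2 m e2 y)) = extract13 n (f2 z)"
    using z lift13(1)[OF hX] by (intro extract13_inclusion_eq)
  then show ?thesis
    by (simp add: transition13_def z_def[symmetric] y_def[symmetric])
qed

end

section \<open>Interleaving of the persistence modules\<close>

lemma pm_dim_pmod_of: "pm_dim (pmod_of p G m e2) t = (if t < 0 then 0 else m t (1,3))"
  by (simp add: pm_dim_def pmod_of_def)

lemma pm_tr_pmod_of:
  "pm_tr (pmod_of p G m e2) s t x =
     (if 0 \<le> s \<and> s \<le> t then transition13 p (G s) (m s) (e2 s) (m t) (e2 t) x else (\<lambda>_. 0))"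
  by (simp add: pm_tr_def pmod_of_def transition13_def lift13_def)

definition decomposed_filtration :: "nat \<Rightarrow> (real \<Rightarrow> 'a::topological_space set)
     \<Rightarrow> (real \<Rightarrow> ('a \<times> 'b::topological_space) set) \<Rightarrow> (real \<Rightarrow> 'b set) \<Rightarrow> (real \<Rightarrow> nat \<times> nat \<Rightarrow> nat)
     \<Rightarrow> (real \<Rightarrow> ('a,'k::field) kchain \<Rightarrow> (nat \<times> nat \<times> nat \<Rightarrow> 'k))
     \<Rightarrow> (real \<Rightarrow> ('a \<times> 'b,'k) kchain \<Rightarrow> (nat \<times> nat \<times> nat \<Rightarrow> 'k))
     \<Rightarrow> (real \<Rightarrow> ('b,'k) kchain \<Rightarrow> (nat \<times> nat \<times> nat \<Rightarrow> 'k)) \<Rightarrow> bool" where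
  "decomposed_filtration p X1 X2 X3 m e1 e2 e3 \<longleftrightarrow>
     (\<forall>r\<ge>0. span_decomposition p (X1 r) (X2 r) (X3 r) (m r) (e1 r) (e2 r) (e3 r)) \<and>
     (\<forall>s r. 0 \<le> s \<longrightarrow> s \<le> r \<longrightarrow> X1 s \<subseteq> X1 r \<and> X2 s \<subseteq> X2 r \<and> X3 s \<subseteq> X3 r)"

definition shifted_inclusion :: "(real \<Rightarrow> 'a set) \<Rightarrow> (real \<Rightarrow> 'c set) \<Rightarrow> (real \<Rightarrow> 'b set)
     \<Rightarrow> (real \<Rightarrow> 'a set) \<Rightarrow> (real \<Rightarrow> 'c set) \<Rightarrow> (real \<Rightarrow> 'b set) \<Rightarrow> real \<Rightarrow> bool" where
  "shifted_inclusion X1 X2 X3 Y1 Y2 Y3 \<delta> \<longleftrightarrow>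
     (\<forall>s\<ge>0. X1 s \<subseteq> Y1 (s + \<delta>) \<and> X2 s \<subseteq> Y2 (s + \<delta>) \<and> X3 s \<subseteq> Y3 (s + \<delta>))"

definition shift_map :: "nat \<Rightarrow> (real \<Rightarrow> 'a::topological_space set) \<Rightarrow> (real \<Rightarrow> nat \<times> nat \<Rightarrow> nat)
     \<Rightarrow> (real \<Rightarrow> ('a,'k::field) kchain \<Rightarrow> (nat \<times> nat \<times> nat \<Rightarrow> 'k))
     \<Rightarrow> (real \<Rightarrow> nat \<times> nat \<Rightarrow> nat) \<Rightarrow> (real \<Rightarrow> ('a,'k) kchain \<Rightarrow> (nat \<times> nat \<times> nat \<Rightarrow> 'k))
     \<Rightarrow> real \<Rightarrow> real \<Rightarrow> (nat \<Rightarrow> 'k) \<Rightarrow> (nat \<Rightarrow> 'k)" where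
  "shift_map p X2 m e2 n f2 \<delta> t x =
     (if 0 \<le> t then transition13 p (X2 t) (m t) (e2 t) (n (t + \<delta>)) (f2 (t + \<delta>)) x else (\<lambda>_. 0))"

context
  fixes e1 :: "real \<Rightarrow> ('a::topological_space,'k::field) kchain \<Rightarrow> (nat \<times> nat \<times> nat \<Rightarrow> 'k)"
    and e2 :: "real \<Rightarrow> ('a \<times> 'b::topological_space,'k) kchain \<Rightarrow> (nat \<times> nat \<times> nat \<Rightarrow> 'k)"
    and e3 :: "real \<Rightarrow> ('b,'k) kchain \<Rightarrow> (nat \<times> nat \<times> nat \<Rightarrow> 'k)"
    and p X1 X2 X3 m
  assumes X: "decomposed_filtration p X1 X2 X3 m e1 e2 e3"
begin

lemma decomposed_filtration_at: "0 \<le> r \<Longrightarrow> span_decomposition p (X1 r) (X2 r) (X3 r) (m r) (e1 r) (e2 r) (e3 r)"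
  using X by (simp add: decomposed_filtration_def)

lemma decomposed_filtration_mono:
  "0 \<le> s \<Longrightarrow> s \<le> r \<Longrightarrow> X1 s \<subseteq> X1 r \<and> X2 s \<subseteq> X2 r \<and> X3 s \<subseteq> X3 r"
  using X by (simp add: decomposed_filtration_def)

lemma decomposed_filtration_hom_iso_2: "0 \<le> r \<Longrightarrow> hom_iso p (X2 r) (m r) 2 (e2 r)"
  by (rule span_decomposition_hom_iso_2[OF decomposed_filtration_at])

lemma pm_tr_pmod_of_zero: "pm_tr (pmod_of p X2 m e2) s t (\<lambda>_. 0) = (\<lambda>_. 0)"
proof (cases "0 \<le> s \<and> s \<le> t")
  case True
  then show ?thesis
    using transition13_zero[OF decomposed_filtration_at[of s]] decomposed_filtration_at[of t]
      decomposed_filtration_mono[of s t]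
    by (auto simp: pm_tr_pmod_of span_decomposition_def)
qed (auto simp: pm_tr_pmod_of)

end

context
  fixes e1 f1 :: "real \<Rightarrow> ('a::topological_space,'k::field) kchain \<Rightarrow> (nat \<times> nat \<times> nat \<Rightarrow> 'k)"
    and e2 f2 :: "real \<Rightarrow> ('a \<times> 'b::topological_space,'k) kchain \<Rightarrow> (nat \<times> nat \<times> nat \<Rightarrow> 'k)"
    and e3 f3 :: "real \<Rightarrow> ('b,'k) kchain \<Rightarrow> (nat \<times> nat \<times> nat \<Rightarrow> 'k)"
    and p X1 X2 X3 m Y1 Y2 Y3 n and \<delta> :: real
  assumes X: "decomposed_filtration p X1 X2 X3 m e1 e2 e3"
    and Y: "decomposed_filtration p Y1 Y2 Y3 n f1 f2 f3"
    and XY: "shifted_inclusion X1 X2 X3 Y1 Y2 Y3 \<delta>" and \<delta>: "0 \<le> \<delta>"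
begin

lemma shifted_inclusion_at: "0 \<le> s \<Longrightarrow> X1 s \<subseteq> Y1 (s + \<delta>) \<and> X2 s \<subseteq> Y2 (s + \<delta>) \<and> X3 s \<subseteq> Y3 (s + \<delta>)"
  using XY by (simp add: shifted_inclusion_def)

lemma shift_map_zero: "shift_map p X2 m e2 n f2 \<delta> t (\<lambda>_. 0) = (\<lambda>_. 0)"
  using transition13_zero[OF decomposed_filtration_at[OF X] span_decomposition_is_decomp[OF decomposed_filtration_at[OF Y]]]
    shifted_inclusion_at \<delta>
  by (simp add: shift_map_def)

lemma shift_map_natural:
  assumes "s \<le> t"
  shows "shift_map p X2 m e2 n f2 \<delta> t (pm_tr (pmod_of p X2 m e2) s t x)
       = pm_tr (pmod_of p Y2 n f2) (s + \<delta>) (t + \<delta>) (shift_map p X2 m e2 n f2 \<delta> s x)"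
proof (cases "0 \<le> s")
  case False
  then have "pm_tr (pmod_of p X2 m e2) s t x = (\<lambda>_. 0)" "shift_map p X2 m e2 n f2 \<delta> s x = (\<lambda>_. 0)"
    by (simp_all add: pm_tr_pmod_of shift_map_def)
  then show ?thesis
    by (simp only: shift_map_zero pm_tr_pmod_of_zero[OF Y])
next
  case True
  with assms \<delta> have t: "0 \<le> t" "0 \<le> s + \<delta>" "0 \<le> t + \<delta>" "s + \<delta> \<le> t + \<delta>" by simp_all
  have hXs: "hom_iso p (X2 s) (m s) 2 (e2 s)"
    using decomposed_filtration_hom_iso_2[OF X True] .
  have "shift_map p X2 m e2 n f2 \<delta> t (pm_tr (pmod_of p X2 m e2) s t x)
      = transition13 p (X2 t) (m t) (e2 t) (n (t + \<delta>)) (f2 (t + \<delta>))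
          (transition13 p (X2 s) (m s) (e2 s) (m t) (e2 t) x)"
    using True assms t by (simp add: pm_tr_pmod_of shift_map_def)
  also have "\<dots> = transition13 p (X2 s) (m s) (e2 s) (n (t + \<delta>)) (f2 (t + \<delta>)) x"
    using shifted_inclusion_at[OF t(1)] decomposed_filtration_mono[OF X True assms]
    by (intro transition13_comp[OF decomposed_filtration_at[OF X t(1)]
          span_decomposition_is_decomp[OF decomposed_filtration_at[OF Y t(3)]] _ _ _ hXs]) auto
  also have "\<dots> = transition13 p (Y2 (s + \<delta>)) (n (s + \<delta>)) (f2 (s + \<delta>)) (n (t + \<delta>)) (f2 (t + \<delta>))
          (transition13 p (X2 s) (m s) (e2 s) (n (s + \<delta>)) (f2 (s + \<delta>)) x)"
    using shifted_inclusion_at[OF True] decomposed_filtration_mono[OF Y t(2,4)]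
    by (intro transition13_comp[symmetric, OF decomposed_filtration_at[OF Y t(2)]
          span_decomposition_is_decomp[OF decomposed_filtration_at[OF Y t(3)]] _ _ _ hXs]) auto
  also have "\<dots> = pm_tr (pmod_of p Y2 n f2) (s + \<delta>) (t + \<delta>) (shift_map p X2 m e2 n f2 \<delta> s x)"
    using True t by (simp add: pm_tr_pmod_of shift_map_def)
  finally show ?thesis .
qed

lemma shift_map_add:
  assumes "x \<in> kvec (pm_dim (pmod_of p X2 m e2) t)" "y \<in> kvec (pm_dim (pmod_of p X2 m e2) t)"
  shows "shift_map p X2 m e2 n f2 \<delta> t (\<lambda>j. x j + y j)
       = (\<lambda>j. shift_map p X2 m e2 n f2 \<delta> t x j + shift_map p X2 m e2 n f2 \<delta> t y j)"
proof (cases "0 \<le> t")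
  case True
  with \<delta> have "0 \<le> t + \<delta>" by simp
  with True assms show ?thesis
    using shifted_inclusion_at[OF True]
    by (simp add: shift_map_def pm_dim_pmod_of transition13_add[OF decomposed_filtration_at[OF X True]
          span_decomposition_is_decomp[OF decomposed_filtration_at[OF Y]]])
qed (simp add: shift_map_def)

lemma shift_map_scale:
  assumes "x \<in> kvec (pm_dim (pmod_of p X2 m e2) t)"
  shows "shift_map p X2 m e2 n f2 \<delta> t (\<lambda>j. c * x j) = (\<lambda>j. c * shift_map p X2 m e2 n f2 \<delta> t x j)"
proof (cases "0 \<le> t")
  case True
  with \<delta> have "0 \<le> t + \<delta>" by simp
  with True assms show ?thesis
    using shifted_inclusion_at[OF True]
    by (simp add: shift_map_def pm_dim_pmod_of transition13_scale[OF decomposed_filtration_at[OF X True]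
          span_decomposition_is_decomp[OF decomposed_filtration_at[OF Y]]])
qed (simp add: shift_map_def)

lemma shift_map_in_kvec:
  "shift_map p X2 m e2 n f2 \<delta> t x \<in> kvec (pm_dim (pmod_of p Y2 n f2) (t + \<delta>))"
  using \<delta> transition13_in_kvec[of p "X2 t" "m t" "e2 t" "n (t + \<delta>)" "f2 (t + \<delta>)" x]
  by (simp add: shift_map_def pm_dim_pmod_of kvec_def)

lemma pmorph_shift_map: "pmorph \<delta> (pmod_of p X2 m e2) (pmod_of p Y2 n f2) (shift_map p X2 m e2 n f2 \<delta>)"
  unfolding pmorph_def
  by (simp add: shift_map_in_kvec shift_map_add shift_map_scale shift_map_natural)

end

lemma shift_map_shift_map:
  assumes X: "decomposed_filtration p X1 X2 X3 m e1 e2 e3"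
    and Y: "decomposed_filtration p Y1 Y2 Y3 n f1 f2 f3"
    and XY: "shifted_inclusion X1 X2 X3 Y1 Y2 Y3 \<delta>" and YX: "shifted_inclusion Y1 Y2 Y3 X1 X2 X3 \<delta>"
    and \<delta>: "0 \<le> \<delta>"
  shows "shift_map p Y2 n f2 m e2 \<delta> (t + \<delta>) (shift_map p X2 m e2 n f2 \<delta> t x)
       = pm_tr (pmod_of p X2 m e2) t (t + 2 * \<delta>) x"
proof (cases "0 \<le> t")
  case False
  then have "shift_map p X2 m e2 n f2 \<delta> t x = (\<lambda>_. 0)" "pm_tr (pmod_of p X2 m e2) t (t + 2 * \<delta>) x = (\<lambda>_. 0)"
    by (simp_all add: shift_map_def pm_tr_pmod_of)
  then show ?thesis
    by (simp only: shift_map_zero[OF Y X YX \<delta>])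
next
  case True
  with \<delta> have t: "0 \<le> t + \<delta>" "0 \<le> t + \<delta> + \<delta>" by simp_all
  have "shift_map p Y2 n f2 m e2 \<delta> (t + \<delta>) (shift_map p X2 m e2 n f2 \<delta> t x)
      = transition13 p (Y2 (t + \<delta>)) (n (t + \<delta>)) (f2 (t + \<delta>)) (m (t + \<delta> + \<delta>)) (e2 (t + \<delta> + \<delta>))
          (transition13 p (X2 t) (m t) (e2 t) (n (t + \<delta>)) (f2 (t + \<delta>)) x)"
    using True t by (simp add: shift_map_def)
  also have "\<dots> = transition13 p (X2 t) (m t) (e2 t) (m (t + \<delta> + \<delta>)) (e2 (t + \<delta> + \<delta>)) x"
    using shifted_inclusion_at[OF X Y XY \<delta> True] shifted_inclusion_at[OF Y X YX \<delta> t(1)]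
    by (intro transition13_comp[OF decomposed_filtration_at[OF Y t(1)]
          span_decomposition_is_decomp[OF decomposed_filtration_at[OF X t(2)]] _ _ _
          decomposed_filtration_hom_iso_2[OF X True]]) blast+
  also have "\<dots> = pm_tr (pmod_of p X2 m e2) t (t + 2 * \<delta>) x"
    using True \<delta> by (simp add: pm_tr_pmod_of add.assoc)
  finally show ?thesis .
qed

lemma interleaved_pmod_of:
  assumes X: "decomposed_filtration p X1 X2 X3 m e1 e2 e3"
    and Y: "decomposed_filtration p Y1 Y2 Y3 n f1 f2 f3"
    and XY: "shifted_inclusion X1 X2 X3 Y1 Y2 Y3 \<delta>" and YX: "shifted_inclusion Y1 Y2 Y3 X1 X2 X3 \<delta>"
    and \<delta>: "0 \<le> \<delta>"
  shows "interleaved \<delta> (pmod_of p X2 m e2) (pmod_of p Y2 n f2)"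
  unfolding interleaved_def
  using pmorph_shift_map[OF X Y XY \<delta>] pmorph_shift_map[OF Y X YX \<delta>]
    shift_map_shift_map[OF X Y XY YX \<delta>] shift_map_shift_map[OF Y X YX XY \<delta>]
  by blast

section \<open>Thickenings and graphs\<close>

lemma INF_thickening_trans:
  fixes D :: "'a \<Rightarrow> 'a \<Rightarrow> real"
  assumes tri: "\<And>x y z. D x z \<le> D x y + D y z" and nonneg: "\<And>x y. 0 \<le> D x y"
    and AB: "\<And>a. a \<in> A \<Longrightarrow> B \<noteq> {} \<and> (INF u\<in>B. D a u) \<le> d"
    and z: "A \<noteq> {}" "(INF u\<in>A. D z u) \<le> r"
  shows "B \<noteq> {} \<and> (INF u\<in>B. D z u) \<le> r + d"
proof
  show B: "B \<noteq> {}" using AB z(1) by blast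
  have bdd: "bdd_below ((\<lambda>u. D x u) ` S)" for x S
    by (rule bdd_belowI2[where m = 0]) (rule nonneg)
  have "(INF u\<in>B. D z u) - d \<le> D z a" if a: "a \<in> A" for a
  proof -
    have "(INF u\<in>B. D z u) - D z a \<le> D a b" if "b \<in> B" for b
      using cINF_lower[OF bdd that, of z] tri[where x = z and y = a and z = b] by simp
    then have "(INF u\<in>B. D z u) - D z a \<le> (INF u\<in>B. D a u)"
      by (rule cINF_greatest[OF B])
    then show ?thesis using AB[OF a] by simp
  qed
  then have "(INF u\<in>B. D z u) - d \<le> (INF u\<in>A. D z u)"
    by (rule cINF_greatest[OF z(1)])
  then show "(INF u\<in>B. D z u) \<le> r + d" using z(2) by simp
qed

lemma dmax_triangle: "dmax x z \<le> dmax x y + dmax y z"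
  unfolding dmax_def
  using dist_triangle[of "fst x" "fst z" "fst y"] dist_triangle[of "snd x" "snd z" "snd y"]
  by (smt (verit) max.cobounded1 max.cobounded2 max_def)

lemma dmax_nonneg: "0 \<le> dmax x y"
  by (simp add: dmax_def le_max_iff_disj)

lemma thick_thick_subset: "A \<subseteq> thick B d \<Longrightarrow> thick A r \<subseteq> thick B (r + d)"
  unfolding thick_def using INF_thickening_trans[where D = dist, OF dist_triangle zero_le_dist]
  by blast

lemma thick2_thick2_subset: "A \<subseteq> thick2 B d \<Longrightarrow> thick2 A r \<subseteq> thick2 B (r + d)"
  unfolding thick2_def using INF_thickening_trans[where D = dmax, OF dmax_triangle dmax_nonneg]
  by blast

lemma image_thick2_subset:
  assumes f: "\<And>z w. dist (f z) (f w) \<le> dmax z w"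
  shows "f ` thick2 S r \<subseteq> thick (f ` S) r"
proof
  fix y assume "y \<in> f ` thick2 S r"
  then obtain z where y: "y = f z" and S: "S \<noteq> {}" and z: "(INF u\<in>S. dmax z u) \<le> r"
    by (auto simp: thick2_def)
  have "(INF u\<in>S. dist (f z) (f u)) \<le> (INF u\<in>S. dmax z u)"
  proof (rule cINF_mono[OF S])
    show "bdd_below ((\<lambda>u. dist (f z) (f u)) ` S)"
      by (rule bdd_belowI2[where m = 0]) simp
  qed (use f in blast)
  with S z y show "y \<in> thick (f ` S) r"
    by (simp add: thick_def image_image)
qed

lemma fst_image_graph [simp]: "fst ` graph h U = U"
  by (force simp: graph_def)

lemma snd_image_graph [simp]: "snd ` graph h U = h ` U"
  by (force simp: graph_def)

lemma fst_thick2_graph: "fst ` thick2 (graph h U) r \<subseteq> thick U r"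
  using image_thick2_subset[of fst "graph h U" r] by (simp add: dmax_def)

lemma snd_thick2_graph: "snd ` thick2 (graph h U) r \<subseteq> thick (h ` U) r"
  using image_thick2_subset[of snd "graph h U" r] by (simp add: dmax_def)

lemma thick_mono: "s \<le> r \<Longrightarrow> thick S s \<subseteq> thick S r"
  unfolding thick_def by auto

lemma thick2_mono: "s \<le> r \<Longrightarrow> thick2 S s \<subseteq> thick2 S r"
  unfolding thick2_def by auto

lemma decomposed_filtration_graph:
  fixes U :: "'a::metric_space set"
  assumes "\<forall>r\<ge>0. is_decomp p (thick U r) (thick2 (graph h U) r) (thick (h ` U) r) (m r) (e1 r) (e2 r) (e3 r)"
  shows "decomposed_filtration p (thick U) (thick2 (graph h U)) (thick (h ` U)) m e1 e2 e3"
  using assms fst_thick2_graph[of h U] snd_thick2_graph[of h U]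
  by (simp add: decomposed_filtration_def span_decomposition_def thick_mono thick2_mono)

lemma shifted_inclusion_graph:
  assumes "graph h U \<subseteq> thick2 (graph h' U') \<delta>"
  shows "shifted_inclusion (thick U) (thick2 (graph h U)) (thick (h ` U))
           (thick U') (thick2 (graph h' U')) (thick (h' ` U')) \<delta>"
proof -
  have "U \<subseteq> thick U' \<delta>" "h ` U \<subseteq> thick (h' ` U') \<delta>"
    using image_mono[OF assms, of fst] image_mono[OF assms, of snd] fst_thick2_graph snd_thick2_graph
    by force+
  then show ?thesis
    using assms unfolding shifted_inclusion_def
    by (simp add: thick_thick_subset thick2_thick2_subset)
qed

theorem mainTheorem8:
  fixes U U' :: "(real^'n) set" and h h' :: "real^'n \<Rightarrow> real^'n" and p :: nat
    and m m' :: "real \<Rightarrow> nat \<times> nat \<Rightarrow> nat"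
    and e1 e1' :: "real \<Rightarrow> (real^'n, 'k::field) kchain \<Rightarrow> (nat \<times> nat \<times> nat \<Rightarrow> 'k)"
    and e2 e2' :: "real \<Rightarrow> ((real^'n) \<times> (real^'n), 'k) kchain \<Rightarrow> (nat \<times> nat \<times> nat \<Rightarrow> 'k)"
    and e3 e3' :: "real \<Rightarrow> (real^'n, 'k) kchain \<Rightarrow> (nat \<times> nat \<times> nat \<Rightarrow> 'k)"
  assumes fin: "\<forall>r\<ge>0. kfindim TYPE('k) p (thick U r) \<and> kfindim TYPE('k) p (thick2 (graph h U) r)
                        \<and> kfindim TYPE('k) p (thick (h ` U) r)"
    and fin': "\<forall>r\<ge>0. kfindim TYPE('k) p (thick U' r) \<and> kfindim TYPE('k) p (thick2 (graph h' U') r)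
                        \<and> kfindim TYPE('k) p (thick (h' ` U') r)"
    and dec: "\<forall>r\<ge>0. is_decomp p (thick U r) (thick2 (graph h U) r) (thick (h ` U) r)
                        (m r) (e1 r) (e2 r) (e3 r)"
    and dec': "\<forall>r\<ge>0. is_decomp p (thick U' r) (thick2 (graph h' U') r) (thick (h' ` U') r)
                        (m' r) (e1' r) (e2' r) (e3' r)"
  shows "interleaving_distance (pmod_of p (\<lambda>r. thick2 (graph h U) r) m e2)
                               (pmod_of p (\<lambda>r. thick2 (graph h' U') r) m' e2')
         \<le> hausdorff2 (graph h U) (graph h' U')"
proof -
  \<comment> \<open>\<open>fin\<close> and \<open>fin'\<close> only ensure that the decompositions exist; \<open>dec\<close> and \<open>dec'\<close> are what is used.\<close>
  have "interleaved \<delta> (pmod_of p (thick2 (graph h U)) m e2) (pmod_of p (thick2 (graph h' U')) m' e2')"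
    if "0 \<le> \<delta>" "graph h U \<subseteq> thick2 (graph h' U') \<delta>" "graph h' U' \<subseteq> thick2 (graph h U) \<delta>" for \<delta>
    using that
    by (intro interleaved_pmod_of[OF decomposed_filtration_graph[OF dec] decomposed_filtration_graph[OF dec']]
        shifted_inclusion_graph)
  then show ?thesis
    unfolding interleaving_distance_def hausdorff2_def by (intro Inf_superset_mono) blast
qed

end
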